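(* Let $f_0, g_0 \in \mathbb{C}[z]$ be polynomials of equal length having nonzero constant coefficients. Let $\sigma_0,\sigma_1,\ldots$ be a sequence of values from $\{-1,1\}$, and define $f_n, g_n$ recursively for all $n \in \mathbb{N}$ by \[ f_{n+1}(z) = f_n(z)+\sigma_n z^{\operatorname{len} f_n} f_n^\dagger(-z), \qquad g_{n+1}(z) = g_n(z)+\sigma_n z^{\operatorname{len} g_n} g_n^\dagger(-z). \] Then \begin{align*} \lim_{n \to \infty} \mathrm{ADF}(f_n) & = -1 + \frac{2}{3} \cdot \frac{\|f_0\|_4^4+ \|f_0 \widetilde{f}_0\|_2^2}{ \|f_0\|_2^4} \geq \frac{1}{3}, \\ \lim_{n \to \infty} \mathrm{ADF}(g_n) & = -1 + \frac{2}{3} \cdot \frac{\|g_0\|_4^4+ \|g_0 \widetilde{g}_0\|_2^2}{ \|g_0\|_2^4} \geq \frac{1}{3}, \\ \lim_{n \to \infty} \mathrm{CDF}(f_n,g_n) & = \frac{2 \|f_0 g_0\|_2^2+\|f_0 \widetilde{g}_0\|_2^2 + \operatorname{Re} \int f_0 \widetilde{f}_0 \overline{g_0 \widetilde{g}_0}}{3 \|f_0\|_2^2 \|g_0\|_2^2}, \end{align*} and consequently \begin{align*} \lim_{n \to\infty} \mathrm{PSC}(f_n,g_n) ={}& \frac{2 \|f_0 g_0\|_2^2+\|f_0 \widetilde{g}_0\|_2^2 + \operatorname{Re} \int f_0 \widetilde{f}_0 \overline{g_0 \widetilde{g}_0}}{3 \|f_0\|_2^2 \|g_0\|_2^2} \\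 &+ \frac{\sqrt{\left(2\|f_0\|_4^4+2 \|f_0 \widetilde{f}_0\|_2^2-3\|f_0\|_2^4\right) \left(2\|g_0\|_4^4+2\|g_0 \widetilde{g}_0\|_2^2-3\|g_0\|_2^4\right)}}{3 \|f_0\|_2^2 \|g_0\|_2^2}. \end{align*}
   Context: A polynomial $a(z)=a_0+a_1z+\cdots+a_dz^d\in\mathbb{C}[z]$ of degree $d$ is identified with the sequence $(a_0,\ldots,a_d)$; its length is $\operatorname{len} a = 1+\deg a$. Its conjugate reciprocal is $a^\dagger(z)=\overline{a_d}+\overline{a_{d-1}}z+\cdots+\overline{a_0}z^d$, and $f_n^\dagger(-z)$ means $(f_n^\dagger)$ evaluated at $-z$. For a Laurent polynomial $a(z)=\sum_j a_j z^j$: $\widetilde{a}(z)=a(-z)$; $\overline{a(z)}=\sum_j \overline{a_j} z^{-j}$ (conjugation on the unit circle); $\int a$ denotes the constant coefficient $a_0=\frac{1}{2\pi}\int_0^{2\pi}a(e^{i\theta})\,d\theta$; and for $p\ge1$, $\|a\|_p=\left(\frac{1}{2\pi}\int_0^{2\pi}|a(e^{i\theta})|^p d\theta\right)^{1/p}$. For sequences $f,g$ of equal length, the aperiodic crosscorrelation is $C_{f,g}(s)=\sum_j f_{j+s}\overline{g_j}$ (terms outside the index range are $0$); the crosscorrelation demerit factor is $\mathrm{CDF}(f,g)=\sum_{s}|C_{f,g}(s)|^2/(|C_{f,f}(0)||C_{g,g}(0)|)$, which equals $\|fg\|_2^2/(\|f\|_2^2\|g\|_2^2)$; the autocorrelation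 demerit factor is $\mathrm{ADF}(f)=\mathrm{CDF}(f,f)-1=\|f\|_4^4/\|f\|_2^4-1$; and the Pursley–Sarwate Criterion is $\mathrm{PSC}(f,g)=\sqrt{\mathrm{ADF}(f)\mathrm{ADF}(g)}+\mathrm{CDF}(f,g)$. *)

theory Defs
  imports "HOL-Analysis.Analysis" "HOL-Computational_Algebra.Polynomial"
begin

definition plen :: "complex poly \<Rightarrow> nat" where
  "plen a = Suc (degree a)"

definition cdagger :: "complex poly \<Rightarrow> complex poly" where
  "cdagger a = (\<Sum>j\<le>degree a. monom (cnj (coeff a (degree a - j))) j)"

definition ptilde :: "complex poly \<Rightarrow> complex poly" where
  "ptilde a = pcompose a [:0, -1:]"

definition lpnorm :: "real \<Rightarrow> complex poly \<Rightarrow> real" where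
  "lpnorm p a = ((1 / (2 * pi)) * integral {0..2*pi} (\<lambda>\<theta>. norm (poly a (cis \<theta>)) powr p)) powr (1 / p)"

definition circ_int_conj :: "complex poly \<Rightarrow> complex poly \<Rightarrow> complex" where
  "circ_int_conj a b = (1 / (2 * pi)) * integral {0..2*pi} (\<lambda>\<theta>. poly a (cis \<theta>) * cnj (poly b (cis \<theta>)))"

definition icoeff :: "complex poly \<Rightarrow> int \<Rightarrow> complex" where
  "icoeff a k = (if k < 0 then 0 else coeff a (nat k))"

definition crosscorr :: "complex poly \<Rightarrow> complex poly \<Rightarrow> int \<Rightarrow> complex" where
  "crosscorr f g s = (\<Sum>j<max (plen f) (plen g). icoeff f (int j + s) * cnj (icoeff g (int j)))"

definition CDF :: "complex poly \<Rightarrow> complex poly \<Rightarrow> real" where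
  "CDF f g = (\<Sum>s\<in>{- int (max (plen f) (plen g)) .. int (max (plen f) (plen g))}.
                 (cmod (crosscorr f g s))\<^sup>2)
             / (cmod (crosscorr f f 0) * cmod (crosscorr g g 0))"

definition ADF :: "complex poly \<Rightarrow> real" where
  "ADF f = CDF f f - 1"

definition PSC :: "complex poly \<Rightarrow> complex poly \<Rightarrow> real" where
  "PSC f g = sqrt (ADF f * ADF g) + CDF f g"

end

theory Submission
  imports Defs
begin

(* On the unit circle, where conj z = 1/z, the recursion reads
     f_{n+1}(z) = f_n(z) + e z^m conj (f_n(-z)),   e = +-1,  m = 2 deg f_n + 1.
   Expanding |f_{n+1} g_{n+1}|^2 and f_{n+1}(z) f_{n+1}(-z) conj (g_{n+1}(z) g_{n+1}(-z)) and averaging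
   over the circle, the terms with a single factor z^m are odd under z -> -z and average to 0, the
   terms with z^(2m) have frequency above the degree of their polynomial factor and average to 0 too,
   and the remaining terms pair up under z -> -z. So P = ||f g||^2, Q = ||f g~||^2 and
   R = Re int f f~ conj (g g~) satisfy
     P' = 2 (P + Q + R),   Q' = 2 (P + Q - R),   R' = 2 (P - Q + R),
   while ||f||^2 and ||g||^2 double. Since 2P + Q + R is multiplied by 4 and P - (2P + Q + R)/3 by -2,
   the ratio P / (||f||^2 ||g||^2), which by Parseval is CDF (f, g), converges to
   (2P + Q + R) / (3 ||f||^2 ||g||^2) evaluated at n = 0. Taking g = f gives the ADF limit; the bound
   1/3 is the variance inequality for |f(z)|^2 + |f(-z)|^2. *)

section \<open>Averages over the unit circle\<close>

definition circle_mean :: "(complex \<Rightarrow> 'a::banach) \<Rightarrow> 'a" where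
  "circle_mean \<phi> = (1 / (2 * pi)) *\<^sub>R integral {0..2*pi} (\<lambda>t. \<phi> (cis t))"

lemma circ_int_conj_eq_circle_mean:
  "circ_int_conj a b = circle_mean (\<lambda>z. poly a z * cnj (poly b z))"
  by (simp add: circ_int_conj_def circle_mean_def scaleR_conv_of_real)

lemma lpnorm_eq_circle_mean: "lpnorm p a = circle_mean (\<lambda>z. cmod (poly a z) powr p) powr (1 / p)"
  by (simp add: lpnorm_def circle_mean_def)

lemma integrable_on_circle:
  fixes \<phi> :: "complex \<Rightarrow> 'a::banach"
  assumes "continuous_on UNIV \<phi>"
  shows "(\<lambda>t. \<phi> (cis t)) integrable_on {a..b}"
  by (intro integrable_continuous_real
      continuous_on_compose2[OF assms continuous_on_cis[OF continuous_on_id]]) auto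

lemma circle_mean_add:
  "continuous_on UNIV \<phi> \<Longrightarrow> continuous_on UNIV \<psi> \<Longrightarrow>
     circle_mean (\<lambda>z. \<phi> z + \<psi> z) = circle_mean \<phi> + circle_mean \<psi>"
  by (simp add: circle_mean_def integral_add integrable_on_circle scaleR_add_right)

lemma circle_mean_diff:
  "continuous_on UNIV \<phi> \<Longrightarrow> continuous_on UNIV \<psi> \<Longrightarrow>
     circle_mean (\<lambda>z. \<phi> z - \<psi> z) = circle_mean \<phi> - circle_mean \<psi>"
  by (simp add: circle_mean_def integral_diff integrable_on_circle scaleR_diff_right)

lemma circle_mean_mult_right:
  fixes \<phi> :: "complex \<Rightarrow> 'a::{real_normed_field,banach}"
  shows "circle_mean (\<lambda>z. c * \<phi> z) = c * circle_mean \<phi>"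
  by (simp add: circle_mean_def)

lemma circle_mean_minus: "circle_mean (\<lambda>z. - \<phi> z) = - circle_mean \<phi>"
  by (simp add: circle_mean_def)

lemma circle_mean_const: "circle_mean (\<lambda>z. c) = c"
  by (simp add: circle_mean_def)

lemma circle_mean_cnj: "circle_mean (\<lambda>z. cnj (\<phi> z)) = cnj (circle_mean \<phi>)"
  by (simp add: circle_mean_def integral_cnj)

lemma circle_mean_cong: "(\<And>z. norm z = 1 \<Longrightarrow> \<phi> z = \<psi> z) \<Longrightarrow> circle_mean \<phi> = circle_mean \<psi>"
  by (simp add: circle_mean_def)

lemma circle_mean_of_real:
  assumes "continuous_on UNIV h"
  shows "circle_mean (\<lambda>z. complex_of_real (h z)) = of_real (circle_mean h)"
proof -
  have "((\<lambda>t. complex_of_real (h (cis t))) has_integral of_real (integral {0..2*pi} (\<lambda>t. h (cis t)))) {0..2*pi}"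
    by (intro has_integral_of_real integrable_integral integrable_on_circle assms)
  then show ?thesis
    by (simp add: circle_mean_def integral_unique scaleR_conv_of_real)
qed

lemma circle_mean_nonneg:
  fixes h :: "complex \<Rightarrow> real"
  assumes "continuous_on UNIV h" "\<And>z. 0 \<le> h z"
  shows "0 \<le> circle_mean h"
  unfolding circle_mean_def using assms
  by (auto intro!: divide_nonneg_pos integral_nonneg integrable_on_circle)

lemma square_circle_mean_le:
  fixes h :: "complex \<Rightarrow> real"
  assumes h: "continuous_on UNIV h"
  shows "(circle_mean h)\<^sup>2 \<le> circle_mean (\<lambda>z. (h z)\<^sup>2)"
proof -
  define c where "c = circle_mean h"
  have "0 \<le> circle_mean (\<lambda>z. (h z - c)\<^sup>2)"
    by (intro circle_mean_nonneg continuous_intros h) auto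
  also have "circle_mean (\<lambda>z. (h z - c)\<^sup>2) = circle_mean (\<lambda>z. (h z)\<^sup>2 - 2 * c * h z + c\<^sup>2)"
    by (intro circle_mean_cong) (simp add: power2_eq_square algebra_simps)
  also have "\<dots> = circle_mean (\<lambda>z. (h z)\<^sup>2) - c\<^sup>2"
    using h by (simp add: circle_mean_add circle_mean_diff circle_mean_mult_right circle_mean_const
        continuous_intros c_def power2_eq_square)
  finally show ?thesis
    by (simp add: c_def)
qed

lemma integral_shift_period:
  fixes g :: "real \<Rightarrow> 'a::banach"
  assumes cont: "continuous_on UNIV g" and per: "\<And>t. g (t + p) = g t" and "0 \<le> c" "c \<le> p"
  shows "integral {0..p} (\<lambda>t. g (t + c)) = integral {0..p} g"
proof -
  have integrable: "g integrable_on {a..b}" for a b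
    by (intro integrable_continuous_real continuous_on_subset[OF cont]) auto
  have shift: "integral {a..b} (\<lambda>t. g (t + s)) = integral {a+s..b+s} g" for a b s
    using integral_shift_cbox_plus[of a b g s] by (simp add: o_def add.commute)
  have "integral {0..p} (\<lambda>t. g (t + c)) = integral {c..p} g + integral {p..p+c} g"
    using shift[of 0 p c] Henstock_Kurzweil_Integration.integral_combine[of c p "p+c" g] integrable assms
    by simp
  also have "integral {p..p+c} g = integral {0..c} g"
    using shift[of 0 c p] per by (simp add: add.commute)
  also have "integral {c..p} g + integral {0..c} g = integral {0..p} g"
    using Henstock_Kurzweil_Integration.integral_combine[of 0 c p g] integrable assms
    by (simp add: add.commute)
  finally show ?thesis .
qed

lemma circle_mean_reflect:
  assumes "continuous_on UNIV \<phi>"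
  shows "circle_mean (\<lambda>z. \<phi> (- z)) = circle_mean \<phi>"
proof -
  have "integral {0..2*pi} (\<lambda>t. \<phi> (- cis t)) = integral {0..2*pi} (\<lambda>t. \<phi> (cis (t + pi)))"
    by (simp add: cis_mult[symmetric])
  also have "\<dots> = integral {0..2*pi} (\<lambda>t. \<phi> (cis t))"
    by (rule integral_shift_period)
       (auto intro!: continuous_on_compose2[OF assms] continuous_intros simp: cis_mult[symmetric])
  finally show ?thesis
    by (simp add: circle_mean_def)
qed

lemma circle_mean_odd:
  assumes "continuous_on UNIV \<phi>" "\<And>z. \<phi> (- z) = - \<phi> z"
  shows "circle_mean \<phi> = 0"
proof -
  have "circle_mean \<phi> = - circle_mean \<phi>"
    using circle_mean_reflect[OF assms(1)] circle_mean_minus[of \<phi>] assms(2) by simp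
  then have "2 *\<^sub>R circle_mean \<phi> = 0"
    by (metis add.right_inverse scaleR_2)
  then show ?thesis
    by simp
qed

lemma circle_mean_add_reflect:
  assumes "continuous_on UNIV \<phi>"
  shows "circle_mean (\<lambda>z. \<phi> z + \<phi> (- z)) = 2 *\<^sub>R circle_mean \<phi>"
proof -
  have "continuous_on UNIV (\<lambda>z. \<phi> (- z))"
    by (intro continuous_on_compose2[OF assms] continuous_intros) auto
  then show ?thesis
    using assms by (simp add: circle_mean_add circle_mean_reflect scaleR_2)
qed

section \<open>Parseval's identity\<close>

lemma has_integral_cis_of_int:
  fixes k :: int
  shows "((\<lambda>t. cis (of_int k * t)) has_integral (if k = 0 then 2 * pi else 0)) {0..2*pi}"
proof (cases "k = 0")
  case True
  then show ?thesis
    using has_integral_const_real[of "1::complex" 0 "2*pi"] by (simp add: scaleR_conv_of_real)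
next
  case False
  have "((\<lambda>t. cis (of_int k * t) / (\<i> * of_int k)) has_vector_derivative cis (of_int k * t))
          (at t within {0..2*pi})" for t
  proof -
    have "((\<lambda>z. exp (\<i> * of_int k * z) / (\<i> * of_int k)) has_field_derivative
            (\<i> * of_int k) * exp (\<i> * of_int k * of_real t) / (\<i> * of_int k)) (at (of_real t))"
      by (auto intro!: derivative_eq_intros)
    from has_vector_derivative_real_field[OF this, of "{0..2*pi}"] False
    show ?thesis
      by (simp add: cis_conv_exp mult.assoc)
  qed
  then have "((\<lambda>t. cis (of_int k * t)) has_integral
      (cis (of_int k * (2*pi)) / (\<i> * of_int k) - cis (of_int k * 0) / (\<i> * of_int k))) {0..2*pi}"
    by (intro fundamental_theorem_of_calculus) auto
  moreover have "cis (of_int k * (2*pi)) = 1"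
    by (metis cis_multiple_2pi mult.commute Ints_of_int)
  ultimately show ?thesis
    using False by simp
qed

lemma poly_cis_eq_sum:
  assumes "degree p \<le> N"
  shows "poly p (cis t) = (\<Sum>i\<le>N. coeff p i * cis (of_nat i * t))"
proof -
  have "poly p (cis t) = (\<Sum>i\<le>degree p. coeff p i * cis t ^ i)"
    by (rule poly_altdef)
  also have "\<dots> = (\<Sum>i\<le>N. coeff p i * cis t ^ i)"
    by (rule sum.mono_neutral_left) (use assms in \<open>auto simp: coeff_eq_0\<close>)
  finally show ?thesis
    by (simp only: Complex.DeMoivre)
qed

lemma circ_int_conj_parseval:
  assumes "degree p \<le> N" "degree q \<le> N"
  shows "circ_int_conj p q = (\<Sum>k\<le>N. coeff p k * cnj (coeff q k))"
proof -
  have expand: "poly p (cis t) * cnj (poly q (cis t)) =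
      (\<Sum>i\<le>N. \<Sum>j\<le>N. (coeff p i * cnj (coeff q j)) * cis (of_int (int i - int j) * t))" for t
    unfolding poly_cis_eq_sum[OF assms(1)] poly_cis_eq_sum[OF assms(2)]
    by (simp add: sum_distrib_left sum_distrib_right cis_cnj cis_mult algebra_simps) (rule sum.swap)
  have "((\<lambda>t. poly p (cis t) * cnj (poly q (cis t))) has_integral
      (\<Sum>i\<le>N. \<Sum>j\<le>N. (coeff p i * cnj (coeff q j)) * (if int i - int j = 0 then 2 * pi else 0))) {0..2*pi}"
    unfolding expand by (intro has_integral_sum finite_atMost has_integral_mult_right has_integral_cis_of_int)
  also have "(\<Sum>i\<le>N. \<Sum>j\<le>N. (coeff p i * cnj (coeff q j)) * (if int i - int j = 0 then 2 * pi else 0))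
      = (\<Sum>i\<le>N. (coeff p i * cnj (coeff q i)) * (2 * pi))"
    by (simp add: if_distrib sum.delta cong: if_cong)
  finally show ?thesis
    by (simp add: circ_int_conj_eq_circle_mean circle_mean_def integral_unique scaleR_conv_of_real
        sum_distrib_right[symmetric])
qed

lemma circ_int_conj_swap: "circ_int_conj b a = cnj (circ_int_conj a b)"
  by (simp add: circ_int_conj_eq_circle_mean mult.commute flip: circle_mean_cnj)

lemma circ_int_conj_self: "circ_int_conj p p = of_real (\<Sum>k\<le>degree p. (cmod (coeff p k))\<^sup>2)"
  by (simp add: circ_int_conj_parseval[of p "degree p" p] complex_mult_cnj cmod_power2)

lemma Re_circ_int_conj_self_pos:
  assumes "coeff p 0 \<noteq> 0"
  shows "0 < Re (circ_int_conj p p)"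
proof -
  have "0 < (cmod (coeff p 0))\<^sup>2"
    using assms by simp
  also have "\<dots> \<le> (\<Sum>k\<le>degree p. (cmod (coeff p k))\<^sup>2)"
    by (rule member_le_sum) auto
  finally show ?thesis
    by (simp add: circ_int_conj_self)
qed

lemma Re_circ_int_conj_self_eq: "Re (circ_int_conj p p) = circle_mean (\<lambda>z. (cmod (poly p z))\<^sup>2)"
proof -
  have "circ_int_conj p p = circle_mean (\<lambda>z. complex_of_real ((cmod (poly p z))\<^sup>2))"
    unfolding circ_int_conj_eq_circle_mean by (simp only: complex_norm_square)
  also have "\<dots> = of_real (circle_mean (\<lambda>z. (cmod (poly p z))\<^sup>2))"
    by (intro circle_mean_of_real continuous_intros)
  finally show ?thesis
    by simp
qed

lemma lpnorm_2_squared: "(lpnorm 2 p)\<^sup>2 = Re (circ_int_conj p p)"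
proof -
  have "0 \<le> Re (circ_int_conj p p)"
    by (simp add: circ_int_conj_self sum_nonneg)
  then show ?thesis
    by (simp add: lpnorm_eq_circle_mean Re_circ_int_conj_self_eq powr_half_sqrt)
qed

lemma lpnorm_4_pow_4: "(lpnorm 4 p) ^ 4 = Re (circ_int_conj (p * p) (p * p))"
proof -
  have "cmod (poly p z) powr 4 = (cmod (poly (p * p) z))\<^sup>2" for z
    by (simp add: norm_mult power_mult_distrib flip: power_add)
  then have "lpnorm 4 p = Re (circ_int_conj (p * p) (p * p)) powr (1/4)"
    by (simp add: lpnorm_eq_circle_mean Re_circ_int_conj_self_eq)
  moreover have "0 \<le> Re (circ_int_conj (p * p) (p * p))"
    by (simp add: circ_int_conj_self sum_nonneg)
  ultimately show ?thesis
    by (cases "Re (circ_int_conj (p * p) (p * p)) = 0") (simp_all add: powr_power)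
qed

section \<open>Conjugate reciprocal and reflection\<close>

lemma unit_power_mult_cnj: "norm z = 1 \<Longrightarrow> z ^ n * cnj (z ^ n) = 1"
  using complex_norm_square[of "z ^ n"] by (simp add: norm_power)

lemma coeff_cdagger:
  "coeff (cdagger p) j = (if j \<le> degree p then cnj (coeff p (degree p - j)) else 0)"
  by (simp add: cdagger_def coeff_sum coeff_monom sum.delta' cong: if_cong)

lemma degree_cdagger_le: "degree (cdagger p) \<le> degree p"
  by (rule degree_le) (auto simp: coeff_cdagger)

lemma poly_cdagger:
  assumes "norm z = 1"
  shows "poly (cdagger p) z = z ^ degree p * cnj (poly p z)"
proof -
  have z: "z \<noteq> 0" "cnj z = inverse z"
    using assms complex_norm_square[of z] inverse_unique[of z "cnj z"] by auto
  have "poly (cdagger p) z = (\<Sum>j\<le>degree p. cnj (coeff p (degree p - j)) * z ^ j)"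
    by (simp add: cdagger_def poly_sum poly_monom)
  also have "\<dots> = (\<Sum>j\<le>degree p. cnj (coeff p j) * z ^ (degree p - j))"
    by (rule sum.reindex_bij_witness[of _ "\<lambda>j. degree p - j" "\<lambda>j. degree p - j"]) auto
  also have "\<dots> = (\<Sum>j\<le>degree p. z ^ degree p * (cnj (coeff p j) * inverse z ^ j))"
    using z by (intro sum.cong) (auto simp: power_diff power_inverse field_simps)
  also have "\<dots> = z ^ degree p * cnj (poly p z)"
    using z by (simp add: poly_altdef sum_distrib_left)
  finally show ?thesis .
qed

lemma poly_ptilde: "poly (ptilde p) z = poly p (- z)"
  by (simp add: ptilde_def poly_pcompose)

lemma coeff_ptilde: "coeff (ptilde p) k = (-1) ^ k * coeff p k"
proof (induction p arbitrary: k)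
  case (pCons a p)
  then show ?case
    by (cases k) (simp_all add: ptilde_def pcompose_pCons coeff_pCons)
qed (simp add: ptilde_def)

lemma degree_ptilde: "degree (ptilde p) = degree p"
  by (simp add: ptilde_def degree_pcompose)

lemma ptilde_ptilde: "ptilde (ptilde p) = p"
  by (rule poly_eqI) (simp add: coeff_ptilde)

section \<open>Even and odd parts on the circle\<close>

definition sym_norm_sq :: "complex poly \<Rightarrow> complex \<Rightarrow> complex" where
  "sym_norm_sq p z = poly p z * cnj (poly p z) + poly p (- z) * cnj (poly p (- z))"

(* On the unit circle this is 2 Re (z^-k p(z)). *)
definition twice_Re_twist :: "nat \<Rightarrow> complex poly \<Rightarrow> complex \<Rightarrow> complex" where
  "twice_Re_twist k p z = cnj (z ^ k) * poly p z + z ^ k * cnj (poly p z)"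

lemma continuous_on_sym_norm_sq [continuous_intros]: "continuous_on S (sym_norm_sq p)"
  unfolding sym_norm_sq_def[abs_def] by (intro continuous_intros)

lemma continuous_on_twice_Re_twist [continuous_intros]: "continuous_on S (twice_Re_twist k p)"
  unfolding twice_Re_twist_def[abs_def] by (intro continuous_intros)

lemma circle_mean_sym_norm_sq: "circle_mean (sym_norm_sq p) = 2 * circ_int_conj p p"
  using circle_mean_add_reflect[of "\<lambda>z. poly p z * cnj (poly p z)"]
  by (simp add: sym_norm_sq_def[abs_def] circ_int_conj_eq_circle_mean continuous_intros
      scaleR_conv_of_real)

lemma circle_mean_twice_Re_twist:
  assumes "degree p < k"
  shows "circle_mean (twice_Re_twist k p) = 0"
proof -
  have "circle_mean (\<lambda>z. cnj (z ^ k) * poly p z) = circ_int_conj p (monom 1 k)"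
    by (simp add: circ_int_conj_eq_circle_mean poly_monom mult.commute)
  also have "\<dots> = 0"
    using assms by (simp add: circ_int_conj_parseval[of p k] coeff_monom if_distrib[of cnj]
        if_distrib[of "times _"] coeff_eq_0 degree_monom_le cong: if_cong)
  finally have "circle_mean (\<lambda>z. cnj (z ^ k) * poly p z) = 0" .
  then show ?thesis
    using circle_mean_cnj[of "\<lambda>z. cnj (z ^ k) * poly p z"]
    by (simp add: twice_Re_twist_def[abs_def] circle_mean_add continuous_intros)
qed

lemma circle_mean_sym_norm_sq_mult_twist:
  assumes "odd k"
  shows "circle_mean (\<lambda>z. sym_norm_sq p z * twice_Re_twist k (q * ptilde q) z) = 0"
proof (rule circle_mean_odd)
  show "continuous_on UNIV (\<lambda>z. sym_norm_sq p z * twice_Re_twist k (q * ptilde q) z)"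
    by (intro continuous_intros)
  fix z :: complex
  have "(- z) ^ k = - (z ^ k)"
    using assms by (simp add: power_minus_odd)
  then show "sym_norm_sq p (- z) * twice_Re_twist k (q * ptilde q) (- z) =
      - (sym_norm_sq p z * twice_Re_twist k (q * ptilde q) z)"
    by (simp add: sym_norm_sq_def twice_Re_twist_def poly_ptilde algebra_simps)
qed

lemma sym_norm_sq_squared:
  "(sym_norm_sq p z)\<^sup>2 = sym_norm_sq (p * p) z + sym_norm_sq (p * ptilde p) z"
  by (simp add: sym_norm_sq_def poly_ptilde power2_eq_square algebra_simps)

lemma circ_int_conj_square_add_tilde_ge:
  "2 * (Re (circ_int_conj F F))\<^sup>2
     \<le> Re (circ_int_conj (F * F) (F * F)) + Re (circ_int_conj (F * ptilde F) (F * ptilde F))"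
proof -
  define h where "h z = (cmod (poly F z))\<^sup>2 + (cmod (poly F (- z)))\<^sup>2" for z
  have h: "complex_of_real (h z) = sym_norm_sq F z" for z
    by (simp only: h_def sym_norm_sq_def of_real_add complex_norm_square)
  have cont: "continuous_on UNIV h"
    unfolding h_def[abs_def] by (intro continuous_intros)
  have "circle_mean h = 2 * Re (circ_int_conj F F)"
    using arg_cong[OF circle_mean_of_real[OF cont], of Re] by (simp add: h circle_mean_sym_norm_sq)
  moreover have "circle_mean (\<lambda>z. (h z)\<^sup>2)
      = 2 * Re (circ_int_conj (F * F) (F * F)) + 2 * Re (circ_int_conj (F * ptilde F) (F * ptilde F))"
    using arg_cong[OF circle_mean_of_real[of "\<lambda>z. (h z)\<^sup>2"], of Re] cont
    by (simp add: h sym_norm_sq_squared circle_mean_add circle_mean_sym_norm_sq continuous_intros)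
  ultimately show ?thesis
    using square_circle_mean_le[OF cont] by (simp add: power2_eq_square)
qed

section \<open>The doubling step\<close>

definition shapiro_step :: "real \<Rightarrow> complex poly \<Rightarrow> complex poly" where
  "shapiro_step s p = p + smult (of_real s) (monom 1 (plen p) * ptilde (cdagger p))"

(* The form the recursion takes on the unit circle, where conj z = 1/z. *)
definition circle_doubling :: "nat \<Rightarrow> real \<Rightarrow> complex poly \<Rightarrow> complex poly \<Rightarrow> bool" where
  "circle_doubling d e p q \<longleftrightarrow>
     (\<forall>z. norm z = 1 \<longrightarrow> poly q z = poly p z + of_real e * z ^ (2 * d + 1) * cnj (poly p (- z)))"

lemma coeff_shapiro_step_0: "coeff (shapiro_step s p) 0 = coeff p 0"
  by (simp add: shapiro_step_def coeff_monom_mult plen_def)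

lemma degree_shapiro_step:
  assumes "coeff p 0 \<noteq> 0" "s \<noteq> 0"
  shows "degree (shapiro_step s p) = 2 * degree p + 1"
proof (rule antisym)
  have "degree (monom 1 (plen p) * ptilde (cdagger p)) \<le> 2 * degree p + 1"
    using degree_mult_le[of "monom 1 (plen p)" "ptilde (cdagger p)"] degree_cdagger_le[of p]
    by (simp add: degree_monom_eq degree_ptilde plen_def)
  then show "degree (shapiro_step s p) \<le> 2 * degree p + 1"
    unfolding shapiro_step_def
    by (intro degree_add_le) (auto intro: order.trans[OF degree_smult_le])
  have "coeff (shapiro_step s p) (2 * degree p + 1) = of_real s * (-1) ^ degree p * cnj (coeff p 0)"
    by (simp add: shapiro_step_def coeff_monom_mult plen_def coeff_ptilde coeff_cdagger coeff_eq_0)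
  with assms show "2 * degree p + 1 \<le> degree (shapiro_step s p)"
    by (intro le_degree) simp
qed

lemma circle_doubling_shapiro_step:
  "circle_doubling (degree p) (s * (-1) ^ degree p) p (shapiro_step s p)"
  unfolding circle_doubling_def
proof (intro allI impI)
  fix z :: complex
  assume z: "norm z = 1"
  then have "poly (ptilde (cdagger p)) z = (-1) ^ degree p * z ^ degree p * cnj (poly p (- z))"
    by (simp add: poly_ptilde poly_cdagger power_minus[of z])
  moreover have "z ^ plen p * z ^ degree p = z ^ (2 * degree p + 1)"
    by (simp add: plen_def mult_2 flip: power_add)
  ultimately show "poly (shapiro_step s p) z =
      poly p z + of_real (s * (-1) ^ degree p) * z ^ (2 * degree p + 1) * cnj (poly p (- z))"
    by (simp add: shapiro_step_def poly_monom)
qed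

lemma circle_doubling_ptilde:
  "circle_doubling d e p q \<Longrightarrow> circle_doubling d (- e) (ptilde p) (ptilde q)"
  unfolding circle_doubling_def
proof (intro allI impI)
  fix z :: complex
  assume "\<forall>z. norm z = 1 \<longrightarrow> poly q z = poly p z + of_real e * z ^ (2 * d + 1) * cnj (poly p (- z))"
    and "norm z = 1"
  then have "poly q (- z) = poly p (- z) + of_real e * (- z) ^ (2 * d + 1) * cnj (poly p z)"
    by (metis minus_minus norm_minus_cancel)
  then show "poly (ptilde q) z =
      poly (ptilde p) z + of_real (- e) * z ^ (2 * d + 1) * cnj (poly (ptilde p) (- z))"
    by (simp add: poly_ptilde power_minus_odd)
qed

lemma norm_sq_doubling_identity:
  fixes a b w :: complex and e :: real
  assumes "w * cnj w = 1" "e * e = 1"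
  shows "(a + of_real e * w * cnj b) * cnj (a + of_real e * w * cnj b) =
    a * cnj a + b * cnj b + of_real e * (cnj w * (a * b) + w * cnj (a * b))"
proof -
  have "complex_of_real e * of_real e = 1"
    using assms(2) by (simp flip: of_real_mult)
  with assms(1) show ?thesis
    by simp algebra
qed

lemma circ_int_conj_norm_doubling:
  assumes "degree p \<le> d" "e * e = 1" "circle_doubling d e p q"
  shows "circ_int_conj q q = 2 * circ_int_conj p p"
proof -
  have "circ_int_conj q q =
      circle_mean (\<lambda>z. sym_norm_sq p z + of_real e * twice_Re_twist (2 * d + 1) (p * ptilde p) z)"
    unfolding circ_int_conj_eq_circle_mean
  proof (rule circle_mean_cong)
    fix z :: complex
    assume z: "norm z = 1"
    with assms(2,3) show "poly q z * cnj (poly q z) =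
        sym_norm_sq p z + of_real e * twice_Re_twist (2 * d + 1) (p * ptilde p) z"
      unfolding circle_doubling_def sym_norm_sq_def twice_Re_twist_def
      by (simp only: poly_mult poly_ptilde norm_sq_doubling_identity unit_power_mult_cnj)
  qed
  also have "\<dots> = 2 * circ_int_conj p p"
    using assms(1) degree_mult_le[of p "ptilde p"]
    by (simp add: circle_mean_add circle_mean_mult_right continuous_intros circle_mean_sym_norm_sq
        circle_mean_twice_Re_twist degree_ptilde)
  finally show ?thesis .
qed

lemma mult_doubling_identity:
  fixes a b c e w :: complex and e1 e2 :: real
  assumes "w * cnj w = 1" "e1 * e1 = 1" "e2 * e2 = 1"
  shows "(a + of_real e1 * w * cnj b) * (c + of_real e2 * w * cnj e)
      * cnj ((a + of_real e1 * w * cnj b) * (c + of_real e2 * w * cnj e)) =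
    (a * c * cnj (a * c) + b * e * cnj (b * e)) + (a * e * cnj (a * e) + b * c * cnj (b * c))
    + of_real e2 * ((a * cnj a + b * cnj b) * (cnj w * (c * e) + w * cnj (c * e)))
    + of_real e1 * ((c * cnj c + e * cnj e) * (cnj w * (a * b) + w * cnj (a * b)))
    + of_real (e1 * e2) * ((a * b * cnj (c * e) + c * e * cnj (a * b))
        + (cnj (w ^ 2) * (a * b * (c * e)) + w ^ 2 * cnj (a * b * (c * e))))"
proof -
  have "complex_of_real e1 * of_real e1 = 1" "complex_of_real e2 * of_real e2 = 1"
    using assms(2,3) by (simp_all flip: of_real_mult)
  with assms(1) show ?thesis
    by simp algebra
qed

lemma Re_circ_int_conj_mult_doubling:
  assumes "degree F \<le> d" "degree G \<le> d" "e1 * e1 = 1" "e2 * e2 = 1"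
    and "circle_doubling d e1 F F'" "circle_doubling d e2 G G'"
  shows "Re (circ_int_conj (F' * G') (F' * G')) =
    2 * Re (circ_int_conj (F * G) (F * G)) + 2 * Re (circ_int_conj (F * ptilde G) (F * ptilde G))
    + 2 * e1 * e2 * Re (circ_int_conj (F * ptilde F) (G * ptilde G))"
proof -
  define m where "m = 2 * d + 1"
  define integrand where "integrand z =
      sym_norm_sq (F * G) z + sym_norm_sq (F * ptilde G) z
      + of_real e2 * (sym_norm_sq F z * twice_Re_twist m (G * ptilde G) z)
      + of_real e1 * (sym_norm_sq G z * twice_Re_twist m (F * ptilde F) z)
      + of_real (e1 * e2) * ((poly (F * ptilde F) z * cnj (poly (G * ptilde G) z)
          + poly (G * ptilde G) z * cnj (poly (F * ptilde F) z))
        + twice_Re_twist (2 * m) (F * ptilde F * (G * ptilde G)) z)" for z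
  have "circ_int_conj (F' * G') (F' * G') = circle_mean integrand"
    unfolding circ_int_conj_eq_circle_mean
  proof (rule circle_mean_cong)
    fix z :: complex
    assume z: "norm z = 1"
    note identity = mult_doubling_identity[OF unit_power_mult_cnj[OF z, of m] assms(3,4),
        unfolded power_mult[symmetric] mult.commute[of m 2]]
    from z assms(5,6) show "poly (F' * G') z * cnj (poly (F' * G') z) = integrand z"
      unfolding circle_doubling_def integrand_def sym_norm_sq_def twice_Re_twist_def
        m_def[symmetric]
      by (simp only: poly_mult poly_ptilde minus_minus identity)
  qed
  also have "circle_mean integrand = 2 * circ_int_conj (F * G) (F * G)
      + 2 * circ_int_conj (F * ptilde G) (F * ptilde G)
      + of_real (e1 * e2) * (circ_int_conj (F * ptilde F) (G * ptilde G)
        + circ_int_conj (G * ptilde G) (F * ptilde F))"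
  proof -
    have "odd m"
      by (simp add: m_def)
    have "degree (F * ptilde F * (G * ptilde G)) < 2 * m"
      using assms(1,2) degree_mult_le[of "F * ptilde F" "G * ptilde G"]
        degree_mult_le[of F "ptilde F"] degree_mult_le[of G "ptilde G"]
      by (auto simp: m_def degree_ptilde)
    then show ?thesis
      unfolding integrand_def
      by (simp only: circle_mean_add circle_mean_mult_right continuous_intros
          circ_int_conj_eq_circle_mean[symmetric] circle_mean_sym_norm_sq
          circle_mean_sym_norm_sq_mult_twist[OF \<open>odd m\<close>] circle_mean_twice_Re_twist
          mult_zero_right add_0_right)
  qed
  finally show ?thesis
    using circ_int_conj_swap[of "G * ptilde G" "F * ptilde F"] by simp
qed

lemma tilde_doubling_identity:
  fixes a b c f w :: complex and e :: real
  assumes "w * cnj w = 1" "e * e = 1"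
  shows "(a + of_real e * w * cnj b) * (b - of_real e * w * cnj a)
      * cnj ((c + of_real e * w * cnj f) * (f - of_real e * w * cnj c)) =
    (a * b * cnj (c * f) + c * f * cnj (a * b))
    + (a * c * cnj (a * c) + b * f * cnj (b * f)) - (a * f * cnj (a * f) + b * c * cnj (b * c))
    - (cnj (w ^ 2) * (a * b * (c * f)) + w ^ 2 * cnj (a * b * (c * f)))
    + of_real e * ((cnj w * ((a * cnj a - b * cnj b) * (c * f))
          - cnj (cnj w * ((a * cnj a - b * cnj b) * (c * f))))
        - (cnj w * (a * b * (c * cnj c - f * cnj f)) - cnj (cnj w * (a * b * (c * cnj c - f * cnj f)))))"
proof -
  have "complex_of_real e * of_real e = 1"
    using assms(2) by (simp flip: of_real_mult)
  with assms(1) show ?thesis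
    by simp algebra
qed

lemma Re_circ_int_conj_tilde_doubling:
  assumes "degree F \<le> d" "degree G \<le> d" "e * e = 1"
    and "circle_doubling d e F F'" "circle_doubling d e G G'"
  shows "Re (circ_int_conj (F' * ptilde F') (G' * ptilde G')) =
    2 * Re (circ_int_conj (F * ptilde F) (G * ptilde G))
    + 2 * Re (circ_int_conj (F * G) (F * G)) - 2 * Re (circ_int_conj (F * ptilde G) (F * ptilde G))"
proof -
  define m where "m = 2 * d + 1"
  define X1 where "X1 z = cnj (z ^ m) * ((poly F z * cnj (poly F z) - poly F (- z) * cnj (poly F (- z)))
      * poly (G * ptilde G) z)" for z
  define X2 where "X2 z = cnj (z ^ m) * (poly (F * ptilde F) z
      * (poly G z * cnj (poly G z) - poly G (- z) * cnj (poly G (- z))))" for z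
  define integrand where "integrand z =
      (poly (F * ptilde F) z * cnj (poly (G * ptilde G) z) + poly (G * ptilde G) z * cnj (poly (F * ptilde F) z))
      + sym_norm_sq (F * G) z - sym_norm_sq (F * ptilde G) z
      - twice_Re_twist (2 * m) (F * ptilde F * (G * ptilde G)) z
      + of_real e * ((X1 z - cnj (X1 z)) - (X2 z - cnj (X2 z)))" for z
  have "circ_int_conj (F' * ptilde F') (G' * ptilde G') = circle_mean integrand"
    unfolding circ_int_conj_eq_circle_mean
  proof (rule circle_mean_cong)
    fix z :: complex
    assume z: "norm z = 1"
    note identity = tilde_doubling_identity[OF unit_power_mult_cnj[OF z, of m] assms(3),
        unfolded power_mult[symmetric] mult.commute[of m 2]]
    have "poly (ptilde F') z = poly (ptilde F) z + of_real (- e) * z ^ m * cnj (poly (ptilde F) (- z))"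
      "poly (ptilde G') z = poly (ptilde G) z + of_real (- e) * z ^ m * cnj (poly (ptilde G) (- z))"
      using z circle_doubling_ptilde[OF assms(4)] circle_doubling_ptilde[OF assms(5)]
      by (simp_all add: circle_doubling_def m_def)
    then have "poly F' (- z) = poly F (- z) - of_real e * z ^ m * cnj (poly F z)"
      "poly G' (- z) = poly G (- z) - of_real e * z ^ m * cnj (poly G z)"
      by (simp_all add: poly_ptilde)
    with z assms(4,5) show "poly (F' * ptilde F') z * cnj (poly (G' * ptilde G') z) = integrand z"
      unfolding circle_doubling_def integrand_def X1_def X2_def sym_norm_sq_def twice_Re_twist_def
        m_def[symmetric]
      by (simp only: poly_mult poly_ptilde minus_minus identity)
  qed
  also have "circle_mean integrand =
      (circ_int_conj (F * ptilde F) (G * ptilde G) + circ_int_conj (G * ptilde G) (F * ptilde F))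
      + 2 * circ_int_conj (F * G) (F * G) - 2 * circ_int_conj (F * ptilde G) (F * ptilde G)
      + of_real e * ((circle_mean X1 - cnj (circle_mean X1)) - (circle_mean X2 - cnj (circle_mean X2)))"
  proof -
    have "continuous_on UNIV X1" "continuous_on UNIV X2"
      unfolding X1_def[abs_def] X2_def[abs_def] by (intro continuous_intros)+
    moreover have "degree (F * ptilde F * (G * ptilde G)) < 2 * m"
      using assms(1,2) degree_mult_le[of "F * ptilde F" "G * ptilde G"]
        degree_mult_le[of F "ptilde F"] degree_mult_le[of G "ptilde G"]
      by (auto simp: m_def degree_ptilde)
    ultimately show ?thesis
      unfolding integrand_def
      by (simp only: circle_mean_add circle_mean_diff circle_mean_mult_right circle_mean_cnj
          continuous_intros circ_int_conj_eq_circle_mean[symmetric] circle_mean_sym_norm_sq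
          circle_mean_twice_Re_twist diff_zero)
  qed
  finally show ?thesis
    using circ_int_conj_swap[of "G * ptilde G" "F * ptilde F"] by simp
qed

lemma shapiro_step_correlations:
  assumes "degree G = degree F" "s \<in> {-1, 1}"
    and F': "F' = shapiro_step s F" and G': "G' = shapiro_step s G"
  shows "Re (circ_int_conj (F' * G') (F' * G')) =
      2 * Re (circ_int_conj (F * G) (F * G)) + 2 * Re (circ_int_conj (F * ptilde G) (F * ptilde G))
      + 2 * Re (circ_int_conj (F * ptilde F) (G * ptilde G))"
    and "Re (circ_int_conj (F' * ptilde G') (F' * ptilde G')) =
      2 * Re (circ_int_conj (F * G) (F * G)) + 2 * Re (circ_int_conj (F * ptilde G) (F * ptilde G))
      - 2 * Re (circ_int_conj (F * ptilde F) (G * ptilde G))"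
    and "Re (circ_int_conj (F' * ptilde F') (G' * ptilde G')) =
      2 * Re (circ_int_conj (F * G) (F * G)) - 2 * Re (circ_int_conj (F * ptilde G) (F * ptilde G))
      + 2 * Re (circ_int_conj (F * ptilde F) (G * ptilde G))"
    and "circ_int_conj F' F' = 2 * circ_int_conj F F"
    and "circ_int_conj G' G' = 2 * circ_int_conj G G"
proof -
  define d where "d = degree F"
  define e where "e = s * (-1) ^ d"
  have e: "e * e = 1" "(- e) * (- e) = 1"
    using assms(2) by (auto simp: e_def algebra_simps simp flip: power_add)
  have deg: "degree F \<le> d" "degree G \<le> d" "degree (ptilde G) \<le> d"
    using assms(1) by (simp_all add: d_def degree_ptilde)
  have doubling: "circle_doubling d e F F'" "circle_doubling d e G G'"
    using circle_doubling_shapiro_step[of F s] circle_doubling_shapiro_step[of G s] assms(1)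
    by (simp_all add: F' G' d_def e_def)
  show "Re (circ_int_conj (F' * G') (F' * G')) =
      2 * Re (circ_int_conj (F * G) (F * G)) + 2 * Re (circ_int_conj (F * ptilde G) (F * ptilde G))
      + 2 * Re (circ_int_conj (F * ptilde F) (G * ptilde G))"
    using Re_circ_int_conj_mult_doubling[OF deg(1,2) e(1) e(1) doubling] e(1) by simp
  show "Re (circ_int_conj (F' * ptilde G') (F' * ptilde G')) =
      2 * Re (circ_int_conj (F * G) (F * G)) + 2 * Re (circ_int_conj (F * ptilde G) (F * ptilde G))
      - 2 * Re (circ_int_conj (F * ptilde F) (G * ptilde G))"
    \<comment> \<open>the first identity for ptilde G, which doubles with the opposite sign\<close>
    using Re_circ_int_conj_mult_doubling[OF deg(1,3) e doubling(1)
        circle_doubling_ptilde[OF doubling(2)]] e(1)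
    by (simp add: ptilde_ptilde mult.commute[of "ptilde G"])
  show "Re (circ_int_conj (F' * ptilde F') (G' * ptilde G')) =
      2 * Re (circ_int_conj (F * G) (F * G)) - 2 * Re (circ_int_conj (F * ptilde G) (F * ptilde G))
      + 2 * Re (circ_int_conj (F * ptilde F) (G * ptilde G))"
    using Re_circ_int_conj_tilde_doubling[OF deg(1,2) e(1) doubling] by simp
  show "circ_int_conj F' F' = 2 * circ_int_conj F F" "circ_int_conj G' G' = 2 * circ_int_conj G G"
    using circ_int_conj_norm_doubling[OF deg(1) e(1) doubling(1)]
      circ_int_conj_norm_doubling[OF deg(2) e(1) doubling(2)] by simp_all
qed

section \<open>Correlations and demerit factors\<close>

lemma crosscorr_eq_sum: "crosscorr F G s = (\<Sum>j\<le>degree G. icoeff F (int j + s) * cnj (coeff G j))"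
proof -
  have "crosscorr F G s = (\<Sum>j<max (plen F) (plen G). icoeff F (int j + s) * cnj (coeff G j))"
    by (simp add: crosscorr_def icoeff_def)
  also have "\<dots> = (\<Sum>j\<le>degree G. icoeff F (int j + s) * cnj (coeff G j))"
    by (rule sum.mono_neutral_right) (auto simp: plen_def coeff_eq_0)
  finally show ?thesis .
qed

lemma crosscorr_eq_0: "s < - int (degree G) \<Longrightarrow> crosscorr F G s = 0"
  by (simp add: crosscorr_eq_sum icoeff_def)

lemma crosscorr_eq_coeff: "crosscorr F G (int k - int (degree G)) = coeff (F * cdagger G) k"
proof -
  let ?D = "degree G"
  have index: "int k - (int ?D - int l) = int l + (int k - int ?D)" for l
    by simp
  have "crosscorr F G (int k - int ?D) = (\<Sum>l\<le>?D. icoeff F (int k - int l) * cnj (coeff G (?D - l)))"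
    unfolding crosscorr_eq_sum
    by (rule sum.reindex_bij_witness[of _ "\<lambda>l. ?D - l" "\<lambda>l. ?D - l"]) (auto simp: index)
  also have "\<dots> = (\<Sum>l\<in>{..?D} \<inter> {..k}. coeff F (k - l) * cnj (coeff G (?D - l)))"
  proof -
    have "icoeff F (int k - int l) = (if l \<in> {..k} then coeff F (k - l) else 0)" for l
      by (auto simp: icoeff_def nat_diff_distrib)
    then show ?thesis
      unfolding sum.inter_restrict[OF finite_atMost]
      by (simp add: if_distrib[of "\<lambda>x. x * _"] cong: if_cong)
  qed
  also have "\<dots> = coeff (cdagger G * F) k"
    unfolding coeff_mult Int_commute[of "{..?D}"] sum.inter_restrict[OF finite_atMost]
    by (intro sum.cong) (auto simp: coeff_cdagger)
  finally show ?thesis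
    by (simp only: mult.commute)
qed

lemma crosscorr_self_0: "crosscorr F F 0 = circ_int_conj F F"
  by (simp add: crosscorr_eq_sum circ_int_conj_parseval[of F "degree F" F] icoeff_def)

lemma circ_int_conj_mult_cdagger:
  "circ_int_conj (F * cdagger G) (F * cdagger G) = circ_int_conj (F * G) (F * G)"
  unfolding circ_int_conj_eq_circle_mean
proof (rule circle_mean_cong)
  fix z :: complex
  assume "norm z = 1"
  then show "poly (F * cdagger G) z * cnj (poly (F * cdagger G) z)
      = poly (F * G) z * cnj (poly (F * G) z)"
    using unit_power_mult_cnj[of z "degree G"] by (simp add: poly_cdagger mult_ac)
qed

lemma sum_crosscorr_squares:
  "(\<Sum>s\<in>{- int (max (plen F) (plen G)) .. int (max (plen F) (plen G))}. (cmod (crosscorr F G s))\<^sup>2)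
     = Re (circ_int_conj (F * G) (F * G))"
proof -
  define M where "M = max (plen F) (plen G)"
  let ?D = "degree G"
  have "?D \<le> M" "degree F \<le> M"
    by (auto simp: M_def plen_def)
  have "(\<Sum>s\<in>{- int M .. int M}. (cmod (crosscorr F G s))\<^sup>2)
      = (\<Sum>s\<in>{- int ?D .. int M}. (cmod (crosscorr F G s))\<^sup>2)"
    using \<open>?D \<le> M\<close> by (intro sum.mono_neutral_right) (auto simp: crosscorr_eq_0)
  also have "{- int ?D .. int M} = (\<lambda>k. int k - int ?D) ` {..M + ?D}"
  proof (intro set_eqI iffI)
    fix s
    assume "s \<in> {- int ?D .. int M}"
    then show "s \<in> (\<lambda>k. int k - int ?D) ` {..M + ?D}"
      by (intro image_eqI[of _ _ "nat (s + int ?D)"]) auto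
  qed auto
  also have "(\<Sum>s\<in>(\<lambda>k. int k - int ?D) ` {..M + ?D}. (cmod (crosscorr F G s))\<^sup>2)
      = (\<Sum>k\<le>M + ?D. (cmod (coeff (F * cdagger G) k))\<^sup>2)"
    by (simp add: sum.reindex inj_on_def crosscorr_eq_coeff)
  also have "\<dots> = Re (circ_int_conj (F * cdagger G) (F * cdagger G))"
  proof -
    have "degree (F * cdagger G) \<le> M + ?D"
      using degree_mult_le[of F "cdagger G"] degree_cdagger_le[of G] \<open>degree F \<le> M\<close> by linarith
    then show ?thesis
      by (simp add: circ_int_conj_parseval Re_sum complex_mult_cnj cmod_power2)
  qed
  finally show ?thesis
    by (simp add: M_def circ_int_conj_mult_cdagger)
qed

lemma CDF_eq_circ_int_conj:
  "CDF F G = Re (circ_int_conj (F * G) (F * G)) / (Re (circ_int_conj F F) * Re (circ_int_conj G G))"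
proof -
  have "cmod (crosscorr P P 0) = Re (circ_int_conj P P)" for P
    unfolding crosscorr_self_0 circ_int_conj_self norm_of_real by (simp add: sum_nonneg)
  then show ?thesis
    by (simp add: CDF_def sum_crosscorr_squares)
qed

section \<open>Limits\<close>

lemma shapiro_recurrence_tendsto:
  fixes x y r u v :: "nat \<Rightarrow> real"
  assumes x: "\<And>n. x (Suc n) = 2 * x n + 2 * y n + 2 * r n"
    and y: "\<And>n. y (Suc n) = 2 * x n + 2 * y n - 2 * r n"
    and r: "\<And>n. r (Suc n) = 2 * x n - 2 * y n + 2 * r n"
    and u: "\<And>n. u (Suc n) = 2 * u n" and v: "\<And>n. v (Suc n) = 2 * v n"
    and "u 0 \<noteq> 0" "v 0 \<noteq> 0"
  shows "(\<lambda>n. x n / (u n * v n)) \<longlonglongrightarrow> (2 * x 0 + y 0 + r 0) / (3 * u 0 * v 0)"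
proof -
  define S where "S = 2 * x 0 + y 0 + r 0"
  define E where "E = x 0 - S / 3"
  \<comment> \<open>2x + y + r and x - (2x + y + r)/3 are eigen-combinations for the eigenvalues 4 and -2\<close>
  have closed: "2 * x n + y n + r n = 4 ^ n * S" "x n - (2 * x n + y n + r n) / 3 = (-2) ^ n * E"
    "u n = 2 ^ n * u 0" "v n = 2 ^ n * v 0" for n
  proof (induction n)
    case (Suc n)
    have "2 * x (Suc n) + y (Suc n) + r (Suc n) = 4 * (2 * x n + y n + r n)"
      "x (Suc n) - (2 * x (Suc n) + y (Suc n) + r (Suc n)) / 3 = -2 * (x n - (2 * x n + y n + r n) / 3)"
      by (simp_all add: x y r field_simps)
    with Suc show "2 * x (Suc n) + y (Suc n) + r (Suc n) = 4 ^ Suc n * S"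
      "x (Suc n) - (2 * x (Suc n) + y (Suc n) + r (Suc n)) / 3 = (-2) ^ Suc n * E"
      "u (Suc n) = 2 ^ Suc n * u 0" "v (Suc n) = 2 ^ Suc n * v 0"
      by (simp_all add: u v)
  qed (simp_all add: S_def E_def)
  have "x n / (u n * v n) = S / (3 * u 0 * v 0) + (-1/2) ^ n * (E / (u 0 * v 0))" for n
  proof -
    have "u n * v n = 4 ^ n * (u 0 * v 0)"
      by (simp add: closed(3,4)[of n] power_mult_distrib[symmetric] mult_ac)
    moreover have "x n = 4 ^ n * S / 3 + (-2) ^ n * E"
      using closed(1,2)[of n] by (simp add: field_simps)
    ultimately have "x n / (u n * v n) = S / (3 * u 0 * v 0) + ((-2) ^ n / 4 ^ n) * (E / (u 0 * v 0))"
      using assms(6,7) by (simp add: add_divide_distrib)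
    also have "((-2) ^ n / 4 ^ n :: real) = (-1/2) ^ n"
      by (simp add: power_divide[symmetric])
    finally show ?thesis .
  qed
  moreover have "(\<lambda>n. S / (3 * u 0 * v 0) + (-1/2) ^ n * (E / (u 0 * v 0)))
      \<longlonglongrightarrow> S / (3 * u 0 * v 0) + 0 * (E / (u 0 * v 0))"
    by (intro tendsto_intros LIMSEQ_power_zero) auto
  ultimately show ?thesis
    by (simp add: S_def)
qed

lemma shapiro_CDF_tendsto:
  assumes "plen (f 0) = plen (g 0)" "coeff (f 0) 0 \<noteq> 0" "coeff (g 0) 0 \<noteq> 0"
    and sigma: "\<And>n. \<sigma> n \<in> {-1, 1}"
    and f: "\<And>n. f (Suc n) = shapiro_step (\<sigma> n) (f n)"
    and g: "\<And>n. g (Suc n) = shapiro_step (\<sigma> n) (g n)"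
  shows "(\<lambda>n. CDF (f n) (g n)) \<longlonglongrightarrow>
    (2 * (lpnorm 2 (f 0 * g 0))\<^sup>2 + (lpnorm 2 (f 0 * ptilde (g 0)))\<^sup>2
      + Re (circ_int_conj (f 0 * ptilde (f 0)) (g 0 * ptilde (g 0))))
    / (3 * (lpnorm 2 (f 0))\<^sup>2 * (lpnorm 2 (g 0))\<^sup>2)"
proof -
  have coeff_0: "coeff (f n) 0 \<noteq> 0" "coeff (g n) 0 \<noteq> 0" for n
    using assms(2,3) by (induction n) (simp_all add: f g coeff_shapiro_step_0)
  have "degree (g n) = degree (f n)" for n
  proof (induction n)
    case 0
    then show ?case
      using assms(1) by (simp add: plen_def)
  next
    case (Suc n)
    have "\<sigma> n \<noteq> 0"
      using sigma[of n] by auto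
    with Suc show ?case
      by (simp add: f g degree_shapiro_step coeff_0)
  qed
  note step = shapiro_step_correlations[OF this sigma f g]
  define P where "P n = Re (circ_int_conj (f n * g n) (f n * g n))" for n
  define Q where "Q n = Re (circ_int_conj (f n * ptilde (g n)) (f n * ptilde (g n)))" for n
  define R where "R n = Re (circ_int_conj (f n * ptilde (f n)) (g n * ptilde (g n)))" for n
  define Nf where "Nf n = Re (circ_int_conj (f n) (f n))" for n
  define Ng where "Ng n = Re (circ_int_conj (g n) (g n))" for n
  have "(\<lambda>n. P n / (Nf n * Ng n)) \<longlonglongrightarrow> (2 * P 0 + Q 0 + R 0) / (3 * Nf 0 * Ng 0)"
    using Re_circ_int_conj_self_pos[OF assms(2)] Re_circ_int_conj_self_pos[OF assms(3)]
    by (intro shapiro_recurrence_tendsto) (simp_all add: P_def Q_def R_def Nf_def Ng_def step)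
  then show ?thesis
    by (simp add: P_def Q_def R_def Nf_def Ng_def CDF_eq_circ_int_conj lpnorm_2_squared)
qed

lemma shapiro_ADF_tendsto:
  assumes "coeff (f 0) 0 \<noteq> 0" "\<And>n. \<sigma> n \<in> {-1, 1}" "\<And>n. f (Suc n) = shapiro_step (\<sigma> n) (f n)"
  shows "(\<lambda>n. ADF (f n)) \<longlonglongrightarrow>
    -1 + 2/3 * ((lpnorm 4 (f 0))^4 + (lpnorm 2 (f 0 * ptilde (f 0)))^2) / (lpnorm 2 (f 0))^4"
proof -
  define N where "N = (lpnorm 2 (f 0))\<^sup>2"
  define A where "A = (lpnorm 4 (f 0))^4"
  define B where "B = (lpnorm 2 (f 0 * ptilde (f 0)))\<^sup>2"
  have "0 < N"
    using Re_circ_int_conj_self_pos[OF assms(1)] by (simp add: N_def lpnorm_2_squared)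
  have "(\<lambda>n. CDF (f n) (f n)) \<longlonglongrightarrow> (2 * A + B + B) / (3 * N * N)"
    using shapiro_CDF_tendsto[of f f, OF refl assms(1,1,2,3,3)]
    by (simp add: A_def B_def N_def lpnorm_4_pow_4 lpnorm_2_squared)
  then have "(\<lambda>n. ADF (f n)) \<longlonglongrightarrow> (2 * A + B + B) / (3 * N * N) - 1"
    unfolding ADF_def by (intro tendsto_diff tendsto_const)
  also have "(2 * A + B + B) / (3 * N * N) - 1 = -1 + 2/3 * (A + B) / N\<^sup>2"
    using \<open>0 < N\<close> by (simp add: field_simps power2_eq_square)
  also have "N\<^sup>2 = (lpnorm 2 (f 0))^4"
    by (simp add: N_def flip: power_mult)
  finally show ?thesis
    by (simp add: A_def B_def)
qed

lemma ADF_limit_ge: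
  assumes "coeff p 0 \<noteq> 0"
  shows "1/3 \<le> -1 + 2/3 * ((lpnorm 4 p)^4 + (lpnorm 2 (p * ptilde p))^2) / (lpnorm 2 p)^4"
proof -
  define N where "N = (lpnorm 2 p)\<^sup>2"
  define S where "S = (lpnorm 4 p)^4 + (lpnorm 2 (p * ptilde p))\<^sup>2"
  have "0 < N"
    using Re_circ_int_conj_self_pos[OF assms] by (simp add: N_def lpnorm_2_squared)
  moreover have "2 * N\<^sup>2 \<le> S"
    using circ_int_conj_square_add_tilde_ge[of p]
    by (simp add: N_def S_def lpnorm_4_pow_4 lpnorm_2_squared)
  ultimately have "1/3 \<le> -1 + 2/3 * S / N\<^sup>2"
    by (simp add: field_simps)
  moreover have "N\<^sup>2 = (lpnorm 2 p)^4"
    by (simp add: N_def flip: power_mult)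
  ultimately show ?thesis
    by (simp add: S_def)
qed

lemma sqrt_mult_ADF_limits:
  fixes a1 a2 b1 b2 x y :: real
  assumes "x \<noteq> 0" "y \<noteq> 0"
  shows "sqrt ((-1 + 2/3 * (a1 + a2) / x^4) * (-1 + 2/3 * (b1 + b2) / y^4))
    = sqrt ((2 * a1 + 2 * a2 - 3 * x^4) * (2 * b1 + 2 * b2 - 3 * y^4)) / (3 * x\<^sup>2 * y\<^sup>2)"
proof -
  have "(-1 + 2/3 * (a1 + a2) / x^4) * (-1 + 2/3 * (b1 + b2) / y^4)
      = (2 * a1 + 2 * a2 - 3 * x^4) * (2 * b1 + 2 * b2 - 3 * y^4) / (3 * x\<^sup>2 * y\<^sup>2)\<^sup>2"
    using assms by (simp add: field_simps)
  moreover have "sqrt ((3 * x\<^sup>2 * y\<^sup>2)\<^sup>2) = 3 * x\<^sup>2 * y\<^sup>2"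
    by simp
  ultimately show ?thesis
    by (simp add: real_sqrt_divide)
qed

theorem corollary2p7:
  fixes f g :: "nat \<Rightarrow> complex poly" and \<sigma> :: "nat \<Rightarrow> real"
  assumes len_eq: "plen (f 0) = plen (g 0)"
    and f0: "coeff (f 0) 0 \<noteq> 0" and g0: "coeff (g 0) 0 \<noteq> 0"
    and sigma: "\<And>n. \<sigma> n \<in> {-1, 1}"
    and frec: "\<And>n. f (Suc n) = f n + smult (complex_of_real (\<sigma> n))
                      (monom 1 (plen (f n)) * ptilde (cdagger (f n)))"
    and grec: "\<And>n. g (Suc n) = g n + smult (complex_of_real (\<sigma> n))
                      (monom 1 (plen (g n)) * ptilde (cdagger (g n)))"
  shows
    "((\<lambda>n. ADF (f n)) \<longlonglongrightarrow>
        -1 + 2/3 * ((lpnorm 4 (f 0))^4 + (lpnorm 2 (f 0 * ptilde (f 0)))^2) / (lpnorm 2 (f 0))^4)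
   \<and> (-1 + 2/3 * ((lpnorm 4 (f 0))^4 + (lpnorm 2 (f 0 * ptilde (f 0)))^2) / (lpnorm 2 (f 0))^4 \<ge> 1/3)
   \<and> ((\<lambda>n. ADF (g n)) \<longlonglongrightarrow>
        -1 + 2/3 * ((lpnorm 4 (g 0))^4 + (lpnorm 2 (g 0 * ptilde (g 0)))^2) / (lpnorm 2 (g 0))^4)
   \<and> (-1 + 2/3 * ((lpnorm 4 (g 0))^4 + (lpnorm 2 (g 0 * ptilde (g 0)))^2) / (lpnorm 2 (g 0))^4 \<ge> 1/3)
   \<and> ((\<lambda>n. CDF (f n) (g n)) \<longlonglongrightarrow>
        (2 * (lpnorm 2 (f 0 * g 0))^2 + (lpnorm 2 (f 0 * ptilde (g 0)))^2
          + Re (circ_int_conj (f 0 * ptilde (f 0)) (g 0 * ptilde (g 0))))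
        / (3 * (lpnorm 2 (f 0))^2 * (lpnorm 2 (g 0))^2))
   \<and> ((\<lambda>n. PSC (f n) (g n)) \<longlonglongrightarrow>
        (2 * (lpnorm 2 (f 0 * g 0))^2 + (lpnorm 2 (f 0 * ptilde (g 0)))^2
          + Re (circ_int_conj (f 0 * ptilde (f 0)) (g 0 * ptilde (g 0))))
        / (3 * (lpnorm 2 (f 0))^2 * (lpnorm 2 (g 0))^2)
      + sqrt ((2 * (lpnorm 4 (f 0))^4 + 2 * (lpnorm 2 (f 0 * ptilde (f 0)))^2 - 3 * (lpnorm 2 (f 0))^4)
            * (2 * (lpnorm 4 (g 0))^4 + 2 * (lpnorm 2 (g 0 * ptilde (g 0)))^2 - 3 * (lpnorm 2 (g 0))^4))
        / (3 * (lpnorm 2 (f 0))^2 * (lpnorm 2 (g 0))^2))"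
proof -
  have f: "f (Suc n) = shapiro_step (\<sigma> n) (f n)"
    and g: "g (Suc n) = shapiro_step (\<sigma> n) (g n)" for n
    using frec grec by (simp_all add: shapiro_step_def)
  have "lpnorm 2 (f 0) \<noteq> 0" "lpnorm 2 (g 0) \<noteq> 0"
    using Re_circ_int_conj_self_pos[OF f0] Re_circ_int_conj_self_pos[OF g0]
    by (auto simp flip: lpnorm_2_squared)
  note sqrt_limit = sqrt_mult_ADF_limits[OF this]
  note ADF_f = shapiro_ADF_tendsto[OF f0 sigma f] and ADF_g = shapiro_ADF_tendsto[OF g0 sigma g]
  note CDF = shapiro_CDF_tendsto[OF len_eq f0 g0 sigma f g]
  note PSC = tendsto_add[OF tendsto_real_sqrt[OF tendsto_mult[OF ADF_f ADF_g]] CDF,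
      folded PSC_def, unfolded sqrt_limit]
  show ?thesis
    using ADF_f ADF_g CDF PSC ADF_limit_ge[OF f0] ADF_limit_ge[OF g0] by (simp add: add.commute)
qed

end
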